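(* Let $R$ be a commutative ring with $1\neq 0$, $S\subseteq R$ a multiplicatively closed subset, and $M$ a faithful $S$-strong comultiplication $R$-module. If $N$ is a submodule of $M$ with $N\ll^{S}M$, then there exist an ideal $I$ of $R$ with $I\leq^{S}_{e}R$ and $t\in S$ such that $t(0:_{M}I)\leq N\leq (0:_{M}I)$.
   Context: All rings are commutative with $1\neq 0$ and all modules are unital. A multiplicatively closed subset (m.c.s.) $S$ of $R$ is a subset with $0\notin S$, $1\in S$, and $ss'\in S$ for all $s,s'\in S$. For an ideal $I$ of $R$, $(0:_M I)=\{m\in M: Im=0\}$; $\mathrm{Ann}_R(X)=\{r\in R: rX=0\}$; $M$ is faithful if $\mathrm{Ann}_R(M)=0$. A submodule $N\leq M$ is $S$-small in $M$ ($N\ll^{S}M$) if for every submodule $L$ of $M$ and $s\in S$, $sM\leq N+L$ implies $tM\leq L$ for some $t\in S$. $N$ is $S$-essential in $M$ ($N\leq^{S}_{e}M$) if for every submodule $L$ of $M$ with $N\cap L=0$ there is $s\in S$ with $sL=0$; for ideals this is applied to $M=R$. $M$ is an $S$-comultiplication module if for each submodule $N$ of $M$ there exist $s\in S$ and an ideal $I$ of $R$ with $s(0:_M I)\subseteq N\subseteq (0:_M I)$. $M$ satisfies the $S$-double annihilator condition ($S$-DAC) if for each ideal $I$ of $R$ there is $s\in S$ with $s\,\mathrm{Ann}_R((0:_M I))\subseteq I$. $M$ is an $S$-strong comultiplication module if it is an $S$-comultiplication module satisfying the $S$-DAC. *)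

theory Defs
  imports Main "HOL.Modules"
begin

(* R is the ring type 'a :: comm_ring_1 (so 1 \<noteq> 0); the module M is the whole
   type 'b, with scalar multiplication scale, assumed to satisfy module scale. *)

definition mcs :: "'a::comm_ring_1 set \<Rightarrow> bool" where
  "mcs S \<longleftrightarrow> 0 \<notin> S \<and> 1 \<in> S \<and> (\<forall>s\<in>S. \<forall>s'\<in>S. s * s' \<in> S)"

definition is_ideal :: "'a::comm_ring_1 set \<Rightarrow> bool" where
  "is_ideal I \<longleftrightarrow> module.subspace ((*) :: 'a \<Rightarrow> 'a \<Rightarrow> 'a) I"

definition submod :: "('a::comm_ring_1 \<Rightarrow> 'b::ab_group_add \<Rightarrow> 'b) \<Rightarrow> 'b set \<Rightarrow> bool" where
  "submod scale N \<longleftrightarrow> module.subspace scale N"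

definition annM :: "('a::comm_ring_1 \<Rightarrow> 'b::ab_group_add \<Rightarrow> 'b) \<Rightarrow> 'a set \<Rightarrow> 'b set" where
  "annM scale I = {m. \<forall>r\<in>I. scale r m = 0}"

definition AnnR :: "('a::comm_ring_1 \<Rightarrow> 'b::ab_group_add \<Rightarrow> 'b) \<Rightarrow> 'b set \<Rightarrow> 'a set" where
  "AnnR scale X = {r. \<forall>x\<in>X. scale r x = 0}"

definition faithful :: "('a::comm_ring_1 \<Rightarrow> 'b::ab_group_add \<Rightarrow> 'b) \<Rightarrow> bool" where
  "faithful scale \<longleftrightarrow> AnnR scale UNIV = {0}"

definition smul_set :: "('a::comm_ring_1 \<Rightarrow> 'b::ab_group_add \<Rightarrow> 'b) \<Rightarrow> 'a \<Rightarrow> 'b set \<Rightarrow> 'b set" where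
  "smul_set scale s X = scale s ` X"

definition S_small :: "('a::comm_ring_1 \<Rightarrow> 'b::ab_group_add \<Rightarrow> 'b) \<Rightarrow> 'a set \<Rightarrow> 'b set \<Rightarrow> bool" where
  "S_small scale S N \<longleftrightarrow>
     (\<forall>L s. submod scale L \<longrightarrow> s \<in> S \<longrightarrow>
        smul_set scale s UNIV \<subseteq> {n + l | n l. n \<in> N \<and> l \<in> L} \<longrightarrow>
        (\<exists>t\<in>S. smul_set scale t UNIV \<subseteq> L))"

definition S_essential_ideal :: "'a::comm_ring_1 set \<Rightarrow> 'a set \<Rightarrow> bool" where
  "S_essential_ideal S I \<longleftrightarrow>
     (\<forall>L. is_ideal L \<longrightarrow> I \<inter> L = {0} \<longrightarrow> (\<exists>s\<in>S. \<forall>l\<in>L. s * l = 0))"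

definition S_comult :: "('a::comm_ring_1 \<Rightarrow> 'b::ab_group_add \<Rightarrow> 'b) \<Rightarrow> 'a set \<Rightarrow> bool" where
  "S_comult scale S \<longleftrightarrow>
     (\<forall>N. submod scale N \<longrightarrow>
        (\<exists>s\<in>S. \<exists>I. is_ideal I \<and> smul_set scale s (annM scale I) \<subseteq> N \<and> N \<subseteq> annM scale I))"

definition S_DAC :: "('a::comm_ring_1 \<Rightarrow> 'b::ab_group_add \<Rightarrow> 'b) \<Rightarrow> 'a set \<Rightarrow> bool" where
  "S_DAC scale S \<longleftrightarrow>
     (\<forall>I. is_ideal I \<longrightarrow> (\<exists>s\<in>S. (\<lambda>r. s * r) ` AnnR scale (annM scale I) \<subseteq> I))"

definition S_strong_comult :: "('a::comm_ring_1 \<Rightarrow> 'b::ab_group_add \<Rightarrow> 'b) \<Rightarrow> 'a set \<Rightarrow> bool" where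
  "S_strong_comult scale S \<longleftrightarrow> S_comult scale S \<and> S_DAC scale S"

end

theory Submission
  imports Defs
begin

text \<open>By S-comultiplication, \<open>s (0 :\<^sub>M I) \<subseteq> N \<subseteq> (0 :\<^sub>M I)\<close> for some \<open>s \<in> S\<close> and ideal \<open>I\<close>;
  it remains to see that \<open>I\<close> is S-essential. Let \<open>L\<close> be an ideal with \<open>I \<inter> L = 0\<close>. Represent
  the submodule \<open>(0 :\<^sub>M I) + (0 :\<^sub>M L)\<close> as \<open>s' (0 :\<^sub>M J) \<subseteq> (0 :\<^sub>M I) + (0 :\<^sub>M L) \<subseteq> (0 :\<^sub>M J)\<close>.
  Then \<open>J\<close> annihilates both \<open>(0 :\<^sub>M I)\<close> and \<open>(0 :\<^sub>M L)\<close>, so by the S-DAC some \<open>v \<in> S\<close> maps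
  \<open>J\<close> into \<open>I \<inter> L = 0\<close>; hence \<open>v M \<subseteq> (0 :\<^sub>M J)\<close> and \<open>s s' v M \<subseteq> N + (0 :\<^sub>M L)\<close>.
  S-smallness of \<open>N\<close> gives \<open>t M \<subseteq> (0 :\<^sub>M L)\<close>, i.e. \<open>t L\<close> annihilates \<open>M\<close>, and faithfulness
  yields \<open>t L = 0\<close>.\<close>

lemma mcs_mult: "mcs S \<Longrightarrow> a \<in> S \<Longrightarrow> b \<in> S \<Longrightarrow> a * b \<in> S"
  unfolding mcs_def by blast

lemma module_mult: "module ((*) :: 'a::comm_ring_1 \<Rightarrow> _)"
  by unfold_locales (auto simp: algebra_simps)

lemma is_ideal_iff: "is_ideal (I::'a::comm_ring_1 set) \<longleftrightarrow>
   0 \<in> I \<and> (\<forall>x\<in>I. \<forall>y\<in>I. x + y \<in> I) \<and> (\<forall>c. \<forall>x\<in>I. c * x \<in> I)"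
  by (simp only: is_ideal_def module.subspace_def[OF module_mult])

context module
begin

lemma submod_iff: "submod scale N \<longleftrightarrow>
   0 \<in> N \<and> (\<forall>x\<in>N. \<forall>y\<in>N. x + y \<in> N) \<and> (\<forall>c. \<forall>x\<in>N. scale c x \<in> N)"
  by (simp only: submod_def subspace_def)

lemma submod_annM: "submod scale (annM scale I)"
  unfolding submod_iff
proof (intro conjI ballI allI)
  fix c x assume "x \<in> annM scale I"
  then have "scale c (scale r x) = 0" if "r \<in> I" for r
    using that unfolding annM_def by simp
  then show "scale c x \<in> annM scale I"
    unfolding annM_def by (simp add: mult.commute)
qed (auto simp: annM_def scale_right_distrib)

lemma submod_sum:
  assumes "submod scale N" and "submod scale L"
  shows "submod scale {n + l | n l. n \<in> N \<and> l \<in> L}"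
  unfolding submod_iff
proof (intro conjI ballI allI)
  show "0 \<in> {n + l | n l. n \<in> N \<and> l \<in> L}"
    using assms unfolding submod_iff by force
next
  fix x y assume "x \<in> {n + l | n l. n \<in> N \<and> l \<in> L}" "y \<in> {n + l | n l. n \<in> N \<and> l \<in> L}"
  then obtain n l n' l' where "x = n + l" "y = n' + l'" "n \<in> N" "l \<in> L" "n' \<in> N" "l' \<in> L"
    by blast
  moreover have "x + y = (n + n') + (l + l')"
    using calculation by (simp add: ac_simps)
  ultimately show "x + y \<in> {n + l | n l. n \<in> N \<and> l \<in> L}"
    using assms unfolding submod_iff by blast
next
  fix c x assume "x \<in> {n + l | n l. n \<in> N \<and> l \<in> L}"
  then obtain n l where "x = n + l" "n \<in> N" "l \<in> L"
    by blast
  moreover have "scale c x = scale c n + scale c l"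
    using calculation by (simp add: scale_right_distrib)
  ultimately show "scale c x \<in> {n + l | n l. n \<in> N \<and> l \<in> L}"
    using assms unfolding submod_iff by blast
qed

lemma faithful_annihilates:
  assumes "faithful scale" and "smul_set scale t UNIV \<subseteq> annM scale L" and "l \<in> L"
  shows "t * l = 0"
proof -
  have "scale (t * l) m = 0" for m
  proof -
    have "scale l (scale t m) = 0"
      using assms(2,3) unfolding smul_set_def annM_def by blast
    then show ?thesis
      by (simp add: mult.commute)
  qed
  then have "t * l \<in> AnnR scale UNIV"
    unfolding AnnR_def by blast
  then show ?thesis
    using assms(1) unfolding faithful_def by blast
qed

lemma smul_UNIV_subset_annM:
  assumes "\<forall>j\<in>J. v * j = 0"
  shows "smul_set scale v UNIV \<subseteq> annM scale J"
  using assms unfolding smul_set_def annM_def by (auto simp: mult.commute)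

lemma S_DAC_disjoint_ideals:
  assumes "mcs S" and "S_DAC scale S" and "is_ideal I" and "is_ideal L" and "I \<inter> L = {0}"
    and "J \<subseteq> AnnR scale (annM scale I)" and "J \<subseteq> AnnR scale (annM scale L)"
  obtains v where "v \<in> S" and "\<forall>j\<in>J. v * j = 0"
proof -
  obtain s1 where "s1 \<in> S" and s1: "(\<lambda>r. s1 * r) ` AnnR scale (annM scale I) \<subseteq> I"
    using assms(2,3) unfolding S_DAC_def by blast
  obtain s2 where "s2 \<in> S" and s2: "(\<lambda>r. s2 * r) ` AnnR scale (annM scale L) \<subseteq> L"
    using assms(2,4) unfolding S_DAC_def by blast
  have "s1 * s2 * j = 0" if "j \<in> J" for j
  proof -
    have "s2 * (s1 * j) \<in> I"
      using s1 assms(3,6) that unfolding is_ideal_iff by blast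
    moreover have "s1 * (s2 * j) \<in> L"
      using s2 assms(4,7) that unfolding is_ideal_iff by blast
    ultimately have "s1 * s2 * j \<in> I \<inter> L"
      by (simp add: ac_simps)
    then show ?thesis
      using assms(5) by blast
  qed
  then show ?thesis
    using that mcs_mult[OF assms(1) \<open>s1 \<in> S\<close> \<open>s2 \<in> S\<close>] by blast
qed

lemma S_comult_sum_annM_disjoint_ideals:
  assumes "mcs S" and "S_comult scale S" and "S_DAC scale S"
    and "is_ideal I" and "is_ideal L" and "I \<inter> L = {0}"
  obtains u where "u \<in> S"
    and "smul_set scale u UNIV \<subseteq> {a + b | a b. a \<in> annM scale I \<and> b \<in> annM scale L}"
proof -
  define K where "K = {a + b | a b. a \<in> annM scale I \<and> b \<in> annM scale L}"
  have "annM scale I \<subseteq> K" "annM scale L \<subseteq> K"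
    unfolding K_def using submod_annM unfolding submod_iff by force+
  obtain s' J where "s' \<in> S" and K1: "smul_set scale s' (annM scale J) \<subseteq> K"
    and K2: "K \<subseteq> annM scale J"
    using assms(2) submod_sum[OF submod_annM submod_annM] unfolding S_comult_def K_def by blast
  have "J \<subseteq> AnnR scale (annM scale I)" "J \<subseteq> AnnR scale (annM scale L)"
    using \<open>annM scale I \<subseteq> K\<close> \<open>annM scale L \<subseteq> K\<close> K2 unfolding AnnR_def annM_def by blast+
  then obtain v where "v \<in> S" and "\<forall>j\<in>J. v * j = 0"
    by (rule S_DAC_disjoint_ideals[OF assms(1,3-6)])
  have "smul_set scale (s' * v) UNIV \<subseteq> K"
  proof (rule subsetI, unfold smul_set_def, elim imageE)
    fix y m assume "y = scale (s' * v) m"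
    have "scale v m \<in> annM scale J"
      using smul_UNIV_subset_annM[OF \<open>\<forall>j\<in>J. v * j = 0\<close>] unfolding smul_set_def by blast
    then have "scale s' (scale v m) \<in> K"
      using K1 unfolding smul_set_def by blast
    then show "y \<in> K"
      using \<open>y = scale (s' * v) m\<close> by simp
  qed
  with mcs_mult[OF assms(1) \<open>s' \<in> S\<close> \<open>v \<in> S\<close>] show ?thesis
    unfolding K_def by (rule that)
qed

lemma S_small_comult_ideal_S_essential:
  assumes "mcs S" and "faithful scale" and "S_comult scale S" and "S_DAC scale S"
    and "S_small scale S N" and "is_ideal I" and "s \<in> S"
    and "smul_set scale s (annM scale I) \<subseteq> N"
  shows "S_essential_ideal S I"
  unfolding S_essential_ideal_def
proof (intro allI impI)
  fix L assume "is_ideal L" and "I \<inter> L = {0}"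
  then obtain u where "u \<in> S"
    and u: "smul_set scale u UNIV \<subseteq> {a + b | a b. a \<in> annM scale I \<and> b \<in> annM scale L}"
    by (rule S_comult_sum_annM_disjoint_ideals[OF assms(1,3,4,6)])
  have "smul_set scale (s * u) UNIV \<subseteq> {n + l | n l. n \<in> N \<and> l \<in> annM scale L}"
  proof
    fix y assume "y \<in> smul_set scale (s * u) UNIV"
    then obtain m where "y = scale s (scale u m)"
      unfolding smul_set_def by auto
    moreover obtain a b where "scale u m = a + b" "a \<in> annM scale I" "b \<in> annM scale L"
      using u unfolding smul_set_def by blast
    ultimately have "y = scale s a + scale s b" "scale s a \<in> N" "scale s b \<in> annM scale L"
      using assms(8) submod_annM unfolding smul_set_def submod_iff
      by (auto simp: scale_right_distrib)
    then show "y \<in> {n + l | n l. n \<in> N \<and> l \<in> annM scale L}"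
      by blast
  qed
  then obtain t where "t \<in> S" and "smul_set scale t UNIV \<subseteq> annM scale L"
    using assms(5) submod_annM mcs_mult[OF assms(1,7) \<open>u \<in> S\<close>] unfolding S_small_def by blast
  then show "\<exists>t\<in>S. \<forall>l\<in>L. t * l = 0"
    using faithful_annihilates[OF assms(2)] by blast
qed

end

theorem proposition2p4:
  fixes scale :: "'a::comm_ring_1 \<Rightarrow> 'b::ab_group_add \<Rightarrow> 'b"
    and S :: "'a set" and N :: "'b set"
  assumes "module scale"
    and "mcs S"
    and "faithful scale"
    and "S_strong_comult scale S"
    and "submod scale N"
    and "S_small scale S N"
  shows "\<exists>I t. is_ideal I \<and> S_essential_ideal S I \<and> t \<in> S \<and>
           smul_set scale t (annM scale I) \<subseteq> N \<and> N \<subseteq> annM scale I"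
proof -
  have comult: "S_comult scale S" and dac: "S_DAC scale S"
    using assms(4) unfolding S_strong_comult_def by auto
  obtain s I where s: "s \<in> S" and I: "is_ideal I"
    and lower: "smul_set scale s (annM scale I) \<subseteq> N" and upper: "N \<subseteq> annM scale I"
    using comult assms(5) unfolding S_comult_def by blast
  have "S_essential_ideal S I"
    by (rule module.S_small_comult_ideal_S_essential[OF assms(1-3) comult dac assms(6) I s lower])
  with I s lower upper show ?thesis
    by blast
qed

end
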